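(* Let $X$ be a binary $N\times t$ matrix that is 3-good, let $S\subseteq[t]$ with $|S|=3$, $\mathbf{y}=r(X,S)$, $H=H(X,3,\mathbf{y})=([t],E)$, $L_1=\log_2\log_2 t$, $L_2=3L_1$. Let $G'=([t],E')$ be the graph in which distinct vertices $v_1,v_2$ are adjacent iff at least $L_2$ hyperedges of $E$ contain both. Let $E_1\subseteq E$ be the set of hyperedges containing some edge of $G'$ as a subset, $E_2=E\setminus E_1$, and $H_2=([t],E_2)$. Then: (1) every vertex of $H_2$ is contained in at most $2L_1L_2$ hyperedges of $E_2$; (2) $|E_2|$ is less than $6L_1L_2$ times the size of the largest $(3,0)$ configuration in $H_2$.
   Context: For a binary $N\times t$ matrix $X$ with columns $x(1),\dots,x(t)$ and $S\subseteq[t]$, $r(X,S)=\bigvee_{j\in S}x(j)$ (coordinatewise Boolean OR). For $\mathbf{y}\in\{0,1\}^N$, $H(X,3,\mathbf{y})$ is the $3$-uniform hypergraph on $[t]$ whose hyperedges are all $3$-element $S\subseteq[t]$ with $r(X,S)=\mathbf{y}$. A $(3,k)$ configuration of size $L$ is a set of $L$ hyperedges $e_1,\dots,e_L$ with a set $U$, $|U|=k$, such that $e_i\cap e_j=U$ for all $i\ne j$. Fix $p\in(0,1)$; $\Pr_1(s,w)$ is the probability that the OR of $s$ independent uniformly random length-$N$ binary columns of weight $\lfloor pN\rfloor$ equals a fixed vector of weight $w$; $\Pr_2(s,w_1,w)$ is the probability that the OR of $s$ such columns together with a fixed column $\mathbf{y}_1$ of weight $w_1$ equals a fixed vector $\mathbf{y}$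 of weight $w$ with $\mathbf{y}\vee\mathbf{y}_1=\mathbf{y}$. With $L_1=\log_2\log_2 t$, $X$ is 3-good if: (1) for every $\mathbf{y}$, $H(X,3,\mathbf{y})$ has no $(3,1)$ configuration of size $L_1$; (2) for every $\mathbf{y}$ with $|\mathbf{y}|=w$, $H(X,3,\mathbf{y})$ has no $(3,0)$ configuration of size $10\max(t^3\Pr_1(3,w),N)$; (3) for all $\mathbf{y},\mathbf{y}_1$ with $\mathbf{y}\vee\mathbf{y}_1=\mathbf{y}$, $|\mathbf{y}_1|=w_1$, $|\mathbf{y}|=w$, the number of $j$ with $\mathbf{y}_1\vee x(j)=\mathbf{y}$ is less than $10B(N,t)$, where $B(N,t)=t\Pr_2(1,w_1,w)$ if this exceeds $N$, $B(N,t)=N$ if $t^{-1/\sqrt{L_1}}\le t\Pr_2(1,w_1,w)\le N$, and $B(N,t)=L_1/10$ if $t\Pr_2(1,w_1,w)<t^{-1/\sqrt{L_1}}$; (4) for every $\mathbf{y}$ with $|\mathbf{y}|=w$ and integer $w_1\le w$, the number of pairwise disjoint pairs $\{j_1,j_2\}\subseteq[t]$ with $x(j_1)\vee x(j_2)\vee\mathbf{y}=\mathbf{y}$ and $|x(j_1)\vee x(j_2)|=w_1$ is less than $10\max(N,\binom{w}{w_1}t^2\Pr_1(2,w_1))$. *)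

theory Defs
  imports Complex_Main "HOL-Library.FuncSet"
begin

text \<open>Rows are indexed by {..<N}, columns by [t] = {..<t}.
  A binary vector of length N is represented by its support, a subset of {..<N};
  coordinatewise Boolean OR is then union, and the weight is the cardinality.
  A binary N x t matrix X is represented by its columns: X j is the support of
  the column x(j), for j < t.\<close>

definition colweight :: "real \<Rightarrow> nat \<Rightarrow> nat" where
  "colweight p N = nat \<lfloor>p * real N\<rfloor>"

definition cols :: "real \<Rightarrow> nat \<Rightarrow> nat set set" where
  "cols p N = {A. A \<subseteq> {..<N} \<and> card A = colweight p N}"

text \<open>Pr_1(s,w): probability that the OR of s independent uniform random columns
  equals a fixed vector of weight w (the fixed vector is taken to be {..<w};
  by symmetry the probability only depends on w).\<close>
definition Pr1 :: "real \<Rightarrow> nat \<Rightarrow> nat \<Rightarrow> nat \<Rightarrow> real" where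
  "Pr1 p N s w =
     real (card {cs \<in> {..<s} \<rightarrow>\<^sub>E cols p N. (\<Union>i<s. cs i) = {..<w}})
     / real (card (cols p N)) ^ s"

text \<open>Pr_2(s,w_1,w): probability that the OR of s such columns together with a
  fixed column y_1 of weight w_1 equals a fixed y of weight w with y_1 subset y
  (taken as y_1 = {..<w_1}, y = {..<w}).\<close>
definition Pr2 :: "real \<Rightarrow> nat \<Rightarrow> nat \<Rightarrow> nat \<Rightarrow> nat \<Rightarrow> real" where
  "Pr2 p N s w1 w =
     real (card {cs \<in> {..<s} \<rightarrow>\<^sub>E cols p N. {..<w1} \<union> (\<Union>i<s. cs i) = {..<w}})
     / real (card (cols p N)) ^ s"

definition L1 :: "nat \<Rightarrow> real" where
  "L1 t = log 2 (log 2 (real t))"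

definition r :: "(nat \<Rightarrow> nat set) \<Rightarrow> nat set \<Rightarrow> nat set" where
  "r X S = (\<Union>j\<in>S. X j)"

definition hyp3 :: "(nat \<Rightarrow> nat set) \<Rightarrow> nat \<Rightarrow> nat set \<Rightarrow> nat set set" where
  "hyp3 X t y = {S. S \<subseteq> {..<t} \<and> card S = 3 \<and> r X S = y}"

definition config :: "nat \<Rightarrow> nat set set \<Rightarrow> nat set set \<Rightarrow> bool" where
  "config k E F \<longleftrightarrow> F \<subseteq> E \<and>
     (\<exists>U. finite U \<and> card U = k \<and> (\<forall>e\<in>F. U \<subseteq> e) \<and>
          (\<forall>e\<in>F. \<forall>e'\<in>F. e \<noteq> e' \<longrightarrow> e \<inter> e' = U))"

definition Bfun :: "real \<Rightarrow> nat \<Rightarrow> nat \<Rightarrow> nat \<Rightarrow> nat \<Rightarrow> real" where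
  "Bfun p N t w1 w =
    (let q = real t * Pr2 p N 1 w1 w in
     if q > real N then q
     else if real t powr (- 1 / sqrt (L1 t)) \<le> q then real N
     else L1 t / 10)"

definition good3 :: "real \<Rightarrow> nat \<Rightarrow> nat \<Rightarrow> (nat \<Rightarrow> nat set) \<Rightarrow> bool" where
  "good3 p N t X \<longleftrightarrow>
    (\<forall>y. y \<subseteq> {..<N} \<longrightarrow>
       \<not> (\<exists>F. config 1 (hyp3 X t y) F \<and> real (card F) \<ge> L1 t)) \<and>
    (\<forall>y. y \<subseteq> {..<N} \<longrightarrow>
       \<not> (\<exists>F. config 0 (hyp3 X t y) F \<and>
              real (card F) \<ge> 10 * max (real t ^ 3 * Pr1 p N 3 (card y)) (real N))) \<and>
    (\<forall>y y1. y \<subseteq> {..<N} \<longrightarrow> y1 \<subseteq> y \<longrightarrow>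
       real (card {j \<in> {..<t}. y1 \<union> X j = y}) < 10 * Bfun p N t (card y1) (card y)) \<and>
    (\<forall>y w1 P. y \<subseteq> {..<N} \<longrightarrow> w1 \<le> card y \<longrightarrow>
       P \<subseteq> {{j1, j2} | j1 j2. j1 < t \<and> j2 < t \<and> j1 \<noteq> j2 \<and>
                 X j1 \<union> X j2 \<union> y = y \<and> card (X j1 \<union> X j2) = w1} \<longrightarrow>
       (\<forall>a\<in>P. \<forall>b\<in>P. a \<noteq> b \<longrightarrow> a \<inter> b = {}) \<longrightarrow>
       real (card P) < 10 * max (real N) (real (card y choose w1) * real t ^ 2 * Pr1 p N 2 w1))"

end

theory Submission
  imports Defs
begin

text \<open>Take a sunflower M of maximum size with kernel U in a finite family A of sets that
  strictly contain U. Every member of A meets some petal of M outside U, since otherwise it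
  could be added to M. Hence |A| is at most the sum, over the points x of the petals outside U,
  of the number of members of A through x.

  For the light hyperedges through a vertex v, take U = {v}: the maximum sunflower is a (3,1)
  configuration, so it has fewer than L1 members, giving fewer than 2 L1 petal points, each
  lying together with v in fewer than L2 hyperedges. This bounds the degrees of H2 by
  2 L1 L2. With U = {} the maximum sunflower is a largest (3,0) configuration of H2, with at
  most 3 times its size many petal points, each of degree less than 2 L1 L2.\<close>

definition sunflower :: "'a set \<Rightarrow> 'a set set \<Rightarrow> bool" where
  "sunflower U F \<longleftrightarrow> (\<forall>e\<in>F. U \<subseteq> e) \<and> (\<forall>e\<in>F. \<forall>e'\<in>F. e \<noteq> e' \<longrightarrow> e \<inter> e' = U)"

definition max_sunflower :: "'a set set \<Rightarrow> 'a set \<Rightarrow> 'a set set \<Rightarrow> bool" where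
  "max_sunflower A U M \<longleftrightarrow> M \<subseteq> A \<and> sunflower U M \<and>
     (\<forall>M'. M' \<subseteq> A \<and> sunflower U M' \<longrightarrow> card M' \<le> card M)"

lemma config_iff_sunflower:
  "config k E F \<longleftrightarrow> F \<subseteq> E \<and> (\<exists>U. finite U \<and> card U = k \<and> sunflower U F)"
  by (simp add: config_def sunflower_def)

lemma config_0_iff: "config 0 E F \<longleftrightarrow> F \<subseteq> E \<and> sunflower {} F"
  by (auto simp: config_iff_sunflower)

lemma config_1I: "F \<subseteq> E \<Longrightarrow> sunflower {v} F \<Longrightarrow> config 1 E F"
  by (auto simp: config_iff_sunflower intro!: exI[of _ "{v}"])

lemma pos_if_config_1_bounded:
  assumes "\<forall>F. config 1 E F \<longrightarrow> real (card F) < L"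
  shows "0 < L"
proof -
  have "config 1 E {}"
    by (rule config_1I) (auto simp: sunflower_def)
  with assms show ?thesis by fastforce
qed

lemma sunflower_insert:
  assumes sf: "sunflower U M" and "U \<subseteq> e" and avoid: "\<forall>m\<in>M. e \<inter> m \<subseteq> U"
  shows "sunflower U (insert e M)"
proof -
  have inter: "e \<inter> m = U" if "m \<in> M" for m
  proof -
    have "U \<subseteq> m"
      using sf that by (simp add: sunflower_def)
    then show ?thesis
      using \<open>U \<subseteq> e\<close> avoid that by blast
  qed
  show ?thesis
    unfolding sunflower_def
  proof (intro conjI ballI impI)
    fix a assume "a \<in> insert e M"
    then show "U \<subseteq> a"
      using sf \<open>U \<subseteq> e\<close> by (auto simp: sunflower_def)
  next
    fix a b assume "a \<in> insert e M" "b \<in> insert e M" "a \<noteq> b"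
    then consider "a = e" "b \<in> M" | "a \<in> M" "b = e" | "a \<in> M" "b \<in> M"
      by blast
    then show "a \<inter> b = U"
    proof cases
      case 1
      then show ?thesis by (simp add: inter)
    next
      case 2
      then show ?thesis by (simp add: inter Int_commute[of m e for m])
    next
      case 3
      then show ?thesis using sf \<open>a \<noteq> b\<close> by (simp add: sunflower_def)
    qed
  qed
qed

lemma max_sunflower_exists:
  assumes "finite A"
  shows "\<exists>M. max_sunflower A U M"
proof -
  have "\<exists>M. (M \<subseteq> A \<and> sunflower U M) \<and>
      (\<forall>M'. M' \<subseteq> A \<and> sunflower U M' \<longrightarrow> card M' \<le> card M)"
  proof (rule ex_has_greatest_nat[where P = "\<lambda>M. M \<subseteq> A \<and> sunflower U M" and f = card])
    show "{} \<subseteq> A \<and> sunflower U {}"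
      by (simp add: sunflower_def)
    show "\<forall>M. M \<subseteq> A \<and> sunflower U M \<longrightarrow> card M < Suc (card A)"
      by (simp add: card_mono[OF assms] less_Suc_eq_le)
  qed
  then show ?thesis
    unfolding max_sunflower_def by blast
qed

lemma max_sunflower_hits:
  assumes "finite A" and M: "max_sunflower A U M" and "e \<in> A" "U \<subset> e"
  shows "\<exists>x\<in>\<Union>M - U. x \<in> e"
proof (rule ccontr)
  assume "\<not> ?thesis"
  then have avoid: "\<forall>m\<in>M. e \<inter> m \<subseteq> U"
    by blast
  have MA: "M \<subseteq> A" and sf: "sunflower U M"
    and maximal: "\<And>M'. M' \<subseteq> A \<Longrightarrow> sunflower U M' \<Longrightarrow> card M' \<le> card M"
    using M by (auto simp: max_sunflower_def)
  have "e \<notin> M"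
    using avoid \<open>U \<subset> e\<close> by auto
  have "sunflower U (insert e M)"
    using sf _ avoid by (rule sunflower_insert) (use \<open>U \<subset> e\<close> in blast)
  then have "card (insert e M) \<le> card M"
    using MA \<open>e \<in> A\<close> by (intro maximal) auto
  then show False
    using \<open>e \<notin> M\<close> finite_subset[OF MA \<open>finite A\<close>] by simp
qed

lemma card_Union_minus_kernel_le:
  assumes "finite M" "finite U" "\<forall>e\<in>M. U \<subseteq> e \<and> card e = k"
  shows "card (\<Union>M - U) \<le> card M * (k - card U)"
proof -
  have "card (\<Union>M - U) = card (\<Union>m\<in>M. m - U)"
    by (rule arg_cong[where f = card]) blast
  also have "\<dots> \<le> (\<Sum>m\<in>M. card (m - U))"
    using assms(1) by (rule card_UN_le)
  also have "\<dots> = (\<Sum>m\<in>M. k - card U)"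
    using assms(2,3) by (intro sum.cong) (auto simp: card_Diff_subset)
  finally show ?thesis
    by simp
qed

lemma card_lt_of_max_sunflower:
  fixes D :: real
  assumes finA: "finite A" and "A \<noteq> {}"
    and edges: "\<forall>e\<in>A. finite e \<and> U \<subset> e \<and> card e = k"
    and M: "max_sunflower A U M"
    and deg: "\<forall>x. x \<notin> U \<longrightarrow> real (card {e\<in>A. x \<in> e}) < D"
  shows "real (card A) < real (card M * (k - card U)) * D"
proof -
  define P where "P = \<Union>M - U"
  have MA: "M \<subseteq> A"
    using M by (simp add: max_sunflower_def)
  have finM: "finite M"
    using finite_subset[OF MA finA] .
  obtain e0 where "e0 \<in> A"
    using \<open>A \<noteq> {}\<close> by blast
  then have "finite e0" "U \<subseteq> e0"
    using edges by auto
  then have finU: "finite U"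
    by (rule finite_subset[rotated])
  have "finite (\<Union>M)"
    by (rule finite_Union[OF finM]) (use MA edges in blast)
  then have finP: "finite P"
    by (simp add: P_def)
  have cover: "A \<subseteq> (\<Union>x\<in>P. {e\<in>A. x \<in> e})"
  proof
    fix e assume "e \<in> A"
    then obtain x where "x \<in> P" "x \<in> e"
      using max_sunflower_hits[OF finA M] edges unfolding P_def by blast
    with \<open>e \<in> A\<close> show "e \<in> (\<Union>x\<in>P. {e\<in>A. x \<in> e})"
      by blast
  qed
  then obtain x0 where "x0 \<in> P"
    using \<open>e0 \<in> A\<close> by blast
  have deg_P: "real (card {e\<in>A. x \<in> e}) < D" if "x \<in> P" for x
    using that deg by (simp add: P_def)
  have "0 \<le> D"
    using deg_P[OF \<open>x0 \<in> P\<close>] by linarith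
  have "card P \<le> card M * (k - card U)"
    unfolding P_def by (rule card_Union_minus_kernel_le[OF finM finU]) (use MA edges in blast)
  have "card A \<le> card (\<Union>x\<in>P. {e\<in>A. x \<in> e})"
    by (rule card_mono[OF finite_subset[OF _ finA] cover]) blast
  also have "\<dots> \<le> (\<Sum>x\<in>P. card {e\<in>A. x \<in> e})"
    by (rule card_UN_le[OF finP])
  finally have "real (card A) \<le> (\<Sum>x\<in>P. real (card {e\<in>A. x \<in> e}))"
    by (metis of_nat_le_iff of_nat_sum)
  also have "\<dots> < (\<Sum>x\<in>P. D)"
    using finP _ deg_P by (rule sum_strict_mono) (use \<open>x0 \<in> P\<close> in blast)
  also have "\<dots> = real (card P) * D"
    by simp
  also have "\<dots> \<le> real (card M * (k - card U)) * D"
    using \<open>card P \<le> card M * (k - card U)\<close> \<open>0 \<le> D\<close> by (intro mult_right_mono of_nat_mono) simp_all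
  finally show ?thesis .
qed

definition light_edges :: "'a set set \<Rightarrow> real \<Rightarrow> 'a set set" where
  "light_edges E L =
     {e\<in>E. \<forall>v1\<in>e. \<forall>v2\<in>e. v1 \<noteq> v2 \<longrightarrow> real (card {e'\<in>E. v1 \<in> e' \<and> v2 \<in> e'}) < L}"

lemma light_edges_eq_diff_heavy:
  "E - {e\<in>E. \<exists>v1\<in>e. \<exists>v2\<in>e. v1 \<noteq> v2 \<and> L \<le> real (card {e'\<in>E. v1 \<in> e' \<and> v2 \<in> e'})}
    = light_edges E L"
  by (auto simp: light_edges_def simp flip: not_less)

lemma light_edges_subset: "light_edges E L \<subseteq> E"
  by (auto simp: light_edges_def)

lemma codegree_light_edges_lt:
  assumes "finite E" "0 < L" "x \<noteq> v"
  shows "real (card {e \<in> light_edges E L. v \<in> e \<and> x \<in> e}) < L"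
proof (cases "{e \<in> light_edges E L. v \<in> e \<and> x \<in> e} = {}")
  case True
  show ?thesis
    unfolding True using \<open>0 < L\<close> by simp
next
  case False
  then obtain e where "e \<in> light_edges E L" "v \<in> e" "x \<in> e"
    by blast
  then have "real (card {e'\<in>E. v \<in> e' \<and> x \<in> e'}) < L"
    using \<open>x \<noteq> v\<close> by (auto simp: light_edges_def)
  moreover have "card {e \<in> light_edges E L. v \<in> e \<and> x \<in> e} \<le> card {e'\<in>E. v \<in> e' \<and> x \<in> e'}"
    by (rule card_mono) (use \<open>finite E\<close> light_edges_subset in auto)
  ultimately show ?thesis
    by linarith
qed

lemma degree_light_edges_lt:
  fixes E :: "nat set set" and L L2 :: real
  assumes finE: "finite E" and uniform: "\<forall>e\<in>E. card e = 3"
    and no_config_1: "\<forall>F. config 1 E F \<longrightarrow> real (card F) < L" and "0 < L2"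
  shows "real (card {e \<in> light_edges E L2. v \<in> e}) < 2 * L * L2"
proof -
  define A where "A = {e \<in> light_edges E L2. v \<in> e}"
  have "0 < L"
    using pos_if_config_1_bounded[OF no_config_1] .
  have "real (card A) < 2 * L * L2"
  proof (cases "A = {}")
    case True
    then show ?thesis
      using \<open>0 < L\<close> \<open>0 < L2\<close> by simp
  next
    case False
    have AE: "A \<subseteq> E"
      using light_edges_subset unfolding A_def by blast
    have finA: "finite A"
      using finite_subset[OF AE finE] .
    have edges: "\<forall>e\<in>A. finite e \<and> {v} \<subset> e \<and> card e = 3"
    proof
      fix e assume "e \<in> A"
      then have "card e = 3" "v \<in> e"
        using AE uniform by (auto simp: A_def)
      then show "finite e \<and> {v} \<subset> e \<and> card e = 3"
        by (auto simp: card_ge_0_finite)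
    qed
    obtain M where M: "max_sunflower A {v} M"
      using max_sunflower_exists[OF finA] by blast
    then have "config 1 E M"
      using AE config_1I[of M E v] by (auto simp: max_sunflower_def)
    then have "real (card M) < L"
      using no_config_1 by blast
    have codegree: "\<forall>x. x \<notin> {v} \<longrightarrow> real (card {e\<in>A. x \<in> e}) < L2"
    proof (intro allI impI)
      fix x assume "x \<notin> {v}"
      have "{e\<in>A. x \<in> e} = {e \<in> light_edges E L2. v \<in> e \<and> x \<in> e}"
        by (auto simp: A_def)
      then show "real (card {e\<in>A. x \<in> e}) < L2"
        using codegree_light_edges_lt[OF finE \<open>0 < L2\<close>, of x v] \<open>x \<notin> {v}\<close> by simp
    qed
    have "real (card A) < real (card M * (3 - card {v})) * L2"
      using card_lt_of_max_sunflower[OF finA False edges M codegree] .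
    also have "\<dots> = real (card M) * 2 * L2"
      by simp
    also have "\<dots> \<le> L * 2 * L2"
      using \<open>real (card M) < L\<close> \<open>0 < L2\<close> by (intro mult_right_mono) auto
    also have "\<dots> = 2 * L * L2"
      by simp
    finally show ?thesis .
  qed
  then show ?thesis
    by (simp add: A_def)
qed

lemma card_lt_max_config_0:
  fixes E :: "nat set set" and D :: real
  assumes finE: "finite E" and "E \<noteq> {}" and uniform: "\<forall>e\<in>E. card e = 3"
    and deg: "\<forall>v. real (card {e\<in>E. v \<in> e}) < D"
  shows "real (card E) < 3 * D * real (Max {card F | F. config 0 E F})"
proof -
  obtain M where M: "max_sunflower E {} M"
    using max_sunflower_exists[OF finE] by blast
  have edges: "\<forall>e\<in>E. finite e \<and> {} \<subset> e \<and> card e = 3"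
    using uniform by (auto simp: card_ge_0_finite)
  have "config 0 E M"
    using M by (simp add: max_sunflower_def config_0_iff)
  moreover have "finite {card F | F. config 0 E F}"
  proof (rule finite_subset)
    show "{card F | F. config 0 E F} \<subseteq> {..card E}"
      using card_mono[OF finE] by (auto simp: config_0_iff)
  qed simp
  ultimately have "card M \<le> Max {card F | F. config 0 E F}"
    by (intro Max_ge) auto
  have "0 < D"
    using deg le_less_trans of_nat_0_le_iff by blast
  have "real (card E) < real (card M * 3) * D"
    using card_lt_of_max_sunflower[OF finE \<open>E \<noteq> {}\<close> edges M] deg by simp
  also have "\<dots> = 3 * D * real (card M)"
    by simp
  also have "\<dots> \<le> 3 * D * real (Max {card F | F. config 0 E F})"
    using \<open>card M \<le> Max {card F | F. config 0 E F}\<close> \<open>0 < D\<close> by (intro mult_left_mono) auto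
  finally show ?thesis .
qed

lemma finite_hyp3: "finite (hyp3 X t y)"
  by (rule finite_subset[of _ "Pow {..<t}"]) (auto simp: hyp3_def)

lemma card_hyp3: "e \<in> hyp3 X t y \<Longrightarrow> card e = 3"
  by (simp add: hyp3_def)

lemma good3_config_1_lt:
  assumes "good3 p N t X" "y \<subseteq> {..<N}" "config 1 (hyp3 X t y) F"
  shows "real (card F) < L1 t"
  using assms by (auto simp: good3_def not_le)

theorem lemma4:
  fixes p :: real and N t :: nat and X :: "nat \<Rightarrow> nat set" and S :: "nat set"
  assumes "0 < p" and "p < 1"
    and "\<forall>j<t. X j \<subseteq> {..<N}"
    and "good3 p N t X"
    and "S \<subseteq> {..<t}" and "card S = 3"
  shows "let y = r X S;
             E = hyp3 X t y;
             L2 = 3 * L1 t;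
             adj = (\<lambda>v1 v2. v1 \<noteq> v2 \<and> real (card {e \<in> E. v1 \<in> e \<and> v2 \<in> e}) \<ge> L2);
             E1 = {e \<in> E. \<exists>v1\<in>e. \<exists>v2\<in>e. adj v1 v2};
             E2 = E - E1
         in (\<forall>v<t. real (card {e \<in> E2. v \<in> e}) \<le> 2 * L1 t * L2) \<and>
            (E2 \<noteq> {} \<longrightarrow>
               real (card E2) < 6 * L1 t * L2 * real (Max {card F | F. config 0 E2 F}))"
proof -
  define E where "E = hyp3 X t (r X S)"
  define E2 where "E2 = light_edges E (3 * L1 t)"
  have "r X S \<subseteq> {..<N}"
    using assms(3,5) unfolding r_def by auto
  then have no_config_1: "\<forall>F. config 1 E F \<longrightarrow> real (card F) < L1 t"
    using good3_config_1_lt[OF assms(4)] unfolding E_def by blast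
  have uniform: "\<forall>e\<in>E. card e = 3"
    by (simp add: E_def card_hyp3)
  have "finite E"
    by (simp add: E_def finite_hyp3)
  have "0 < 3 * L1 t"
    using pos_if_config_1_bounded[OF no_config_1] by simp
  have deg: "\<forall>v. real (card {e \<in> E2. v \<in> e}) < 2 * L1 t * (3 * L1 t)"
    unfolding E2_def using degree_light_edges_lt[OF \<open>finite E\<close> uniform no_config_1 \<open>0 < 3 * L1 t\<close>]
    by blast
  have size_bound: "E2 \<noteq> {} \<longrightarrow>
      real (card E2) < 6 * L1 t * (3 * L1 t) * real (Max {card F | F. config 0 E2 F})"
  proof
    assume "E2 \<noteq> {}"
    have "finite E2" "\<forall>e\<in>E2. card e = 3"
      using finite_subset[OF light_edges_subset \<open>finite E\<close>] light_edges_subset uniform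
      unfolding E2_def by blast+
    then have "real (card E2) < 3 * (2 * L1 t * (3 * L1 t)) * real (Max {card F | F. config 0 E2 F})"
      using card_lt_max_config_0 \<open>E2 \<noteq> {}\<close> deg by blast
    then show "real (card E2) < 6 * L1 t * (3 * L1 t) * real (Max {card F | F. config 0 E2 F})"
      by (simp add: algebra_simps)
  qed
  show ?thesis
    unfolding Let_def E_def[symmetric] light_edges_eq_diff_heavy E2_def[symmetric]
    using deg size_bound by (auto intro: less_imp_le)
qed

end
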